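(* Let $k\ge1$ and let $\alpha_1,\dots,\alpha_k\in[0,1]$. Define accountability weights $$w_j=\Bigl(\prod_{\ell=1}^{j}\alpha_\ell\Bigr)(1-\alpha_{j+1})\quad (j=1,\dots,k-1),\qquad w_k=\prod_{\ell=1}^{k}\alpha_\ell,$$ and let $\bar\alpha=\max_{\ell}\alpha_\ell$. Then $$\max_{j\in\{1,\dots,k\}}w_j\le 1-(1-\bar\alpha)^k.$$ In particular, if $\bar\alpha<1$, then $\max_j w_j<1$ for every finite $k$.
   Context: The $\alpha_\ell$ are the delegation degrees along a delegation chain of length $k$ (agent $\ell$ delegates to agent $\ell+1$ with degree $\alpha_\ell$); $w_j$ is the accountability weight of the $j$-th agent in the chain. *)

theory Defs
  imports Complex_Main
begin

definition acc_weight :: "(nat \<Rightarrow> real) \<Rightarrow> nat \<Rightarrow> nat \<Rightarrow> real" where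
  "acc_weight \<alpha> k j =
     (if j < k then (\<Prod>l=1..j. \<alpha> l) * (1 - \<alpha> (j+1)) else (\<Prod>l=1..k. \<alpha> l))"

end

theory Submission
  imports Defs
begin

text \<open>Every weight is a product of factors in [0,1] one of which is \<open>\<alpha> 1\<close>, so all weights
  are bounded by \<open>\<alpha> 1\<close> and hence by the largest degree m; and m \<le> 1 - (1 - m)^k because
  (1 - m)^k \<le> 1 - m for k \<ge> 1. The strict bound follows from the weights being at most m.\<close>

lemma prod_le_factor:
  fixes f :: "'a \<Rightarrow> 'b::linordered_semidom"
  assumes "finite A" "a \<in> A" "\<And>x. x \<in> A \<Longrightarrow> 0 \<le> f x \<and> f x \<le> 1"
  shows "prod f A \<le> f a"
proof -
  have "prod f A = f a * prod f (A - {a})"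
    using assms(1,2) by (rule prod.remove)
  also have "\<dots> \<le> f a * 1"
    using assms by (intro mult_left_mono prod_le_1) auto
  finally show ?thesis by simp
qed

lemma acc_weight_le_first:
  assumes "j \<in> {1..k}" "\<And>l. l \<in> {1..k} \<Longrightarrow> 0 \<le> \<alpha> l \<and> \<alpha> l \<le> 1"
  shows "acc_weight \<alpha> k j \<le> \<alpha> 1"
proof -
  have prefix_le: "(\<Prod>l=1..i. \<alpha> l) \<le> \<alpha> 1" if "i \<in> {1..k}" for i
    using that assms(2) by (intro prod_le_factor) auto
  show ?thesis
  proof (cases "j < k")
    case True
    have "(\<Prod>l=1..j. \<alpha> l) * (1 - \<alpha> (j+1)) \<le> (\<Prod>l=1..j. \<alpha> l)"
      using assms True by (intro mult_left_le prod_nonneg) auto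
    with True prefix_le[OF assms(1)] show ?thesis
      unfolding acc_weight_def by simp
  next
    case False
    with assms(1) prefix_le[of k] show ?thesis
      unfolding acc_weight_def by simp
  qed
qed

lemma le_one_minus_one_minus_power:
  fixes x :: "'a::linordered_idom"
  assumes "0 \<le> x" "x \<le> 1" "n \<ge> 1"
  shows "x \<le> 1 - (1 - x) ^ n"
proof -
  have "(1 - x) ^ n \<le> (1 - x) ^ 1"
    using assms by (intro power_decreasing) auto
  then show ?thesis by simp
qed

theorem proposition1:
  fixes \<alpha> :: "nat \<Rightarrow> real" and k :: nat
  assumes "k \<ge> 1"
    and "\<And>l. l \<in> {1..k} \<Longrightarrow> 0 \<le> \<alpha> l \<and> \<alpha> l \<le> 1"
  shows "(MAX j\<in>{1..k}. acc_weight \<alpha> k j) \<le> 1 - (1 - (MAX l\<in>{1..k}. \<alpha> l)) ^ k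
         \<and> ((MAX l\<in>{1..k}. \<alpha> l) < 1 \<longrightarrow> (MAX j\<in>{1..k}. acc_weight \<alpha> k j) < 1)"
proof -
  define M where "M = (MAX l\<in>{1..k}. \<alpha> l)"
  have first_in: "1 \<in> {1..k}" using assms(1) by simp
  have first_le_M: "\<alpha> 1 \<le> M"
    unfolding M_def using first_in by (intro Max_ge) auto
  have M_nonneg: "0 \<le> M"
    using first_le_M assms(2)[OF first_in] by linarith
  have M_le_1: "M \<le> 1"
    unfolding M_def using first_in assms(2) by (subst Max_le_iff) auto
  have "acc_weight \<alpha> k j \<le> M" if "j \<in> {1..k}" for j
    using acc_weight_le_first[of j k \<alpha>, OF that assms(2)] first_le_M by linarith
  then have "(MAX j\<in>{1..k}. acc_weight \<alpha> k j) \<le> M"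
    using first_in by (subst Max_le_iff) auto
  moreover have "M \<le> 1 - (1 - M) ^ k"
    using M_nonneg M_le_1 assms(1) by (rule le_one_minus_one_minus_power)
  ultimately show ?thesis
    unfolding M_def[symmetric] by auto
qed

end
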